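(* Assume the standing assumptions below, let $\gamma\in[0,\gamma_* )$ and let $U(\cdot;\gamma)$ be the finite wavefront with speed $c(\gamma)$. Let $\phi_{c(\gamma)}$ denote the flux $|(U^m)'|^{p-1}$ written as a function of the value $U\in(0,1)$ along the wavefront. Then, as $U\to1^-$, $$\phi_{c(\gamma)}(U)=C_{p,\gamma}(1-U)^{\mu_{p,\gamma}}(1+o(1)),$$ where $\mu_{p,\gamma}=p-1$ and $C_{p,\gamma}=(m|h'(1)|/c(\gamma))^{p-1}$ if $p>2$; $\mu_{p,\gamma}=1$ and $C_{p,\gamma}=\frac{-(c(\gamma)+\gamma m)+\sqrt{(c(\gamma)+\gamma m)^2+4m|h'(1)|}}{2}$ if $p=2$; and $\mu_{p,\gamma}=1$, $C_{p,\gamma}=|h'(1)|/\gamma$ if $p\in(1,2)$ and $\gamma>0$.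
   Context: Standing assumptions: $m>0$, $p>1$ with $m(p-1)>1$. $h\in C^1([0,\infty))$ satisfies $h(0)=0$, and for some $a\in[0,1)$: $h\le0$ on $[0,a]$, $h>0$ on $(a,1)$, $h<0$ on $(1,\infty)$, $h'(1)<0$; if $a>0$ also $\int_0^1h(u)u^{m-1}du>0$. For $\gamma\in[0,\gamma_* )$ ($\gamma_*>0$ small), $c(\gamma)>0$ denotes the unique speed for which the one-dimensional equation $u_t=(|(u^m)_r|^{p-2}(u^m)_r)_r+\gamma|(u^m)_r|^{p-2}(u^m)_r+h(u)$ has a finite wavefront, i.e. a travelling wave $U(r-ct)$ with $U$ continuous, nonincreasing, $U(-\infty)=1$, $U=0$ on some $[\xi_0,\infty)$ and $U>0$ on $(-\infty,\xi_0)$; it is unique up to translation. *)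

theory Defs
  imports "HOL-Analysis.Analysis"
begin

definition pflux :: "real \<Rightarrow> real \<Rightarrow> real" where
  "pflux p d = sgn d * \<bar>d\<bar> powr (p - 1)"

text \<open>U is a travelling-wave profile with speed c of
  u_t = (|(u^m)_r|^(p-2) (u^m)_r)_r + gamma |(u^m)_r|^(p-2) (u^m)_r + h(u),
  i.e. U(r - c t) solves it.  Weak (integrated) formulation: U^m is differentiable,
  the flux w = |(U^m)'|^(p-2) (U^m)' is locally integrable, and for all a \<le> b
  w(b) - w(a) + gamma \<integral>_a^b w + \<integral>_a^b h(U) + c (U(b) - U(a)) = 0,
  which is the integrated form of  -c U' = w' + gamma w + h(U).\<close>
definition tw_solution ::
  "real \<Rightarrow> real \<Rightarrow> real \<Rightarrow> (real \<Rightarrow> real) \<Rightarrow> real \<Rightarrow> (real \<Rightarrow> real) \<Rightarrow> bool" where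
  "tw_solution m p \<gamma> h c U \<longleftrightarrow>
     (\<forall>\<xi>. (\<lambda>s. U s powr m) differentiable (at \<xi>)) \<and>
     (\<forall>a b. a \<le> b \<longrightarrow>
        (let w = (\<lambda>s. pflux p (deriv (\<lambda>t. U t powr m) s)) in
          w integrable_on {a..b} \<and>
          w b - w a + \<gamma> * integral {a..b} w + integral {a..b} (\<lambda>s. h (U s))
            + c * (U b - U a) = 0))"

definition finite_wavefront ::
  "real \<Rightarrow> real \<Rightarrow> real \<Rightarrow> (real \<Rightarrow> real) \<Rightarrow> real \<Rightarrow> (real \<Rightarrow> real) \<Rightarrow> bool" where
  "finite_wavefront m p \<gamma> h c U \<longleftrightarrow>
     continuous_on UNIV U \<and>
     antimono U \<and>
     (U \<longlongrightarrow> 1) at_bot \<and>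
     (\<exists>\<xi>0. (\<forall>\<xi>\<ge>\<xi>0. U \<xi> = 0) \<and> (\<forall>\<xi><\<xi>0. U \<xi> > 0)) \<and>
     tw_solution m p \<gamma> h c U"

definition wave_flux :: "real \<Rightarrow> real \<Rightarrow> (real \<Rightarrow> real) \<Rightarrow> real \<Rightarrow> real" where
  "wave_flux m p U \<xi> = \<bar>deriv (\<lambda>t. U t powr m) \<xi>\<bar> powr (p - 1)"

definition flux_asymp ::
  "real \<Rightarrow> real \<Rightarrow> (real \<Rightarrow> real) \<Rightarrow> real \<Rightarrow> real \<Rightarrow> bool" where
  "flux_asymp m p U C \<mu> \<longleftrightarrow>
     (\<forall>\<epsilon>>0. \<exists>\<delta>>0. \<forall>\<xi>. 1 - \<delta> < U \<xi> \<and> U \<xi> < 1 \<longrightarrow>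
        \<bar>wave_flux m p U \<xi> / (C * (1 - U \<xi>) powr \<mu>) - 1\<bar> < \<epsilon>)"

end

theory Submission
  imports Defs
begin

text \<open>
  Along the wave the flux \<open>\<psi> = |(U\<^sup>m)'|\<^bsup>p-1\<^esup>\<close> satisfies
  \<open>\<psi>' = h(U) + c U' - \<gamma> \<psi>\<close> with \<open>U' = - \<psi>\<^bsup>1/(p-1)\<^esup> U\<^bsup>1-m\<^esup> / m\<close>, so the gap
  \<open>\<psi> - K (1 - U)\<^sup>\<mu>\<close> between the flux and a barrier has derivative \<open>F(U, \<psi>)\<close>, where
  \<open>F\<close> is decreasing in \<open>\<psi>\<close>. As \<open>h(u) \<sim> |h'(1)| (1 - u)\<close>, the sign of
  \<open>F(u, K (1 - u)\<^sup>\<mu>)\<close> for \<open>u\<close> near 1 is that of an explicit \<open>L(K)\<close>, which changes sign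
  exactly at the constant \<open>C\<close> of the theorem: for \<open>p > 2\<close> the reaction balances the
  transport term \<open>c U'\<close>, for \<open>p < 2\<close> the term \<open>\<gamma> \<psi>\<close>, and for \<open>p = 2\<close> all three
  are of the same order.

  For \<open>K > C\<close> the gap is therefore decreasing wherever it is positive near \<open>U = 1\<close>. A
  positive gap at \<open>\<xi>\<close> then persists backwards, either up to the last point where \<open>U = 1\<close>,
  at which the gap vanishes, or all the way to \<open>-\<infinity>\<close>, where \<open>\<psi>\<close> would stay away from 0
  and \<open>U\<^sup>m\<close> would grow without bound. Hence \<open>\<psi> \<le> K (1 - U)\<^sup>\<mu>\<close> near \<open>U = 1\<close>, and
  symmetrically \<open>\<psi> \<ge> K (1 - U)\<^sup>\<mu>\<close> for \<open>K < C\<close>.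
\<close>

lemma decreasing_where_pos_imp_ge:
  fixes \<Phi> :: "real \<Rightarrow> real"
  assumes "x < b" "continuous_on {x..b} \<Phi>" "\<Phi> b > 0"
    and der: "\<And>t. x < t \<Longrightarrow> t < b \<Longrightarrow> \<Phi> t > 0 \<Longrightarrow> \<exists>d. DERIV \<Phi> t :> d \<and> d < 0"
  shows "\<Phi> b \<le> \<Phi> x"
proof -
  define S where "S = {x..b} \<inter> \<Phi> -` {..0}"
  have clS: "closed S" unfolding S_def
    by (rule continuous_closed_preimage[OF assms(2)]) auto
  show ?thesis
  proof (cases "S = {}")
    case True
    then have pos: "\<And>t. x \<le> t \<Longrightarrow> t \<le> b \<Longrightarrow> \<Phi> t > 0" unfolding S_def by force
    have "\<Phi> x > \<Phi> b"
      by (rule DERIV_neg_imp_decreasing_open[OF assms(1) _ assms(2)]) (meson der pos less_imp_le)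
    then show ?thesis by simp
  next
    case False
    have bdd: "bdd_above S" unfolding S_def by (auto intro: bdd_aboveI[of _ b])
    define t1 where "t1 = Sup S"
    have "t1 \<in> S" unfolding t1_def using closed_contains_Sup[OF False bdd clS] .
    then have t1: "x \<le> t1" "t1 \<le> b" "\<Phi> t1 \<le> 0" unfolding S_def by auto
    with assms(3) have t1b: "t1 < b" by (cases "t1 = b") auto
    have pos: "\<Phi> t > 0" if "t1 < t" "t \<le> b" for t
    proof (rule ccontr)
      assume "\<not> \<Phi> t > 0"
      then have "t \<in> S" using that t1 unfolding S_def by auto
      then have "t \<le> t1" unfolding t1_def using bdd by (simp add: cSup_upper)
      then show False using that by simp
    qed
    have "\<Phi> t1 > \<Phi> b"
      by (rule DERIV_neg_imp_decreasing_open[OF t1b])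
         (use der pos t1 t1b in \<open>auto intro: continuous_on_subset[OF assms(2)]\<close>)
    then show ?thesis using t1 assms(3) by simp
  qed
qed

lemma increasing_where_neg_imp_le:
  fixes \<Phi> :: "real \<Rightarrow> real"
  assumes "x < b" "continuous_on {x..b} \<Phi>" "\<Phi> b < 0"
    and der: "\<And>t. x < t \<Longrightarrow> t < b \<Longrightarrow> \<Phi> t < 0 \<Longrightarrow> \<exists>d. DERIV \<Phi> t :> d \<and> d > 0"
  shows "\<Phi> x \<le> \<Phi> b"
proof -
  have "- \<Phi> b \<le> - \<Phi> x"
  proof (rule decreasing_where_pos_imp_ge[OF assms(1), where \<Phi> = "\<lambda>t. - \<Phi> t"])
    show "continuous_on {x..b} (\<lambda>t. - \<Phi> t)" using assms(2) by (intro continuous_intros)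
    fix t assume "x < t" "t < b" "- \<Phi> t > 0"
    then obtain d where "DERIV \<Phi> t :> d" "d > 0" using der by force
    then show "\<exists>d. DERIV (\<lambda>t. - \<Phi> t) t :> d \<and> d < 0"
      by (intro exI[of _ "-d"]) (auto intro: derivative_intros)
  qed (use assms(3) in simp)
  then show ?thesis by simp
qed

lemma last_level_point_cases:
  fixes U :: "real \<Rightarrow> real"
  assumes "continuous_on UNIV U" "U \<xi> \<noteq> v"
  obtains t1 where "t1 < \<xi>" "U t1 = v" "\<And>t. t1 < t \<Longrightarrow> t \<le> \<xi> \<Longrightarrow> U t \<noteq> v"
    | "\<And>t. t \<le> \<xi> \<Longrightarrow> U t \<noteq> v"
proof -
  define S where "S = {..\<xi>} \<inter> U -` {v}"
  show ?thesis
  proof (cases "S = {}")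
    case True
    then show ?thesis using that(2) unfolding S_def by blast
  next
    case False
    have "closed S" unfolding S_def
      by (rule continuous_closed_preimage[OF continuous_on_subset[OF assms(1)]]) auto
    moreover have bdd: "bdd_above S" unfolding S_def by (auto intro: bdd_aboveI[of _ \<xi>])
    ultimately have "Sup S \<in> S" using False closed_contains_Sup by blast
    then have le: "Sup S \<le> \<xi>" and v: "U (Sup S) = v" unfolding S_def by auto
    have "U t \<noteq> v" if "Sup S < t" "t \<le> \<xi>" for t
    proof
      assume "U t = v"
      then have "t \<in> S" using that(2) unfolding S_def by simp
      then show False using cSup_upper[OF _ bdd] that(1) by fastforce
    qed
    moreover have "Sup S \<noteq> \<xi>" using v assms(2) by auto
    ultimately show ?thesis using le v that(1)[of "Sup S"] by simp
  qed
qed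

lemma eventually_in_unit_interval_at_left_one: "eventually (\<lambda>u. 0 < u \<and> u < 1) (at_left (1::real))"
  using eventually_at_left_real[of 0 1] by simp

lemma eventually_at_left_one_obtains_delta:
  assumes "eventually P (at_left (1::real))"
  obtains \<delta> where "0 < \<delta>" "\<And>u. 1 - \<delta> < u \<Longrightarrow> u < 1 \<Longrightarrow> 0 < u \<and> P u"
proof -
  have "eventually (\<lambda>u. 0 < u \<and> P u) (at_left (1::real))"
    using assms eventually_in_unit_interval_at_left_one by eventually_elim auto
  then obtain b where "b < 1" "\<And>u. b < u \<Longrightarrow> u < 1 \<Longrightarrow> 0 < u \<and> P u"
    unfolding eventually_at_left_field by blast
  then show ?thesis using that[of "1 - b"] by simp
qed

lemma tendsto_one_minus_powr_at_left_one:
  assumes "k \<ge> 0"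
  shows "((\<lambda>u. (1 - u) powr k) \<longlongrightarrow> of_bool (k = 0)) (at_left (1::real))"
proof (cases "k = 0")
  case True
  have "eventually (\<lambda>u. 1 = (1 - u) powr k) (at_left (1::real))"
    using eventually_in_unit_interval_at_left_one by eventually_elim (use True in auto)
  then show ?thesis using True by (auto intro: tendsto_eventually)
next
  case False
  have "((\<lambda>u. 1 - u) \<longlongrightarrow> 1 - 1) (at_left (1::real))"
    by (intro tendsto_intros)
  then have "((\<lambda>u. (1 - u) powr k) \<longlongrightarrow> (1 - 1) powr k) (at_left (1::real))"
    by (rule tendsto_powr'[OF _ tendsto_const])
       (use assms False eventually_in_unit_interval_at_left_one in \<open>auto elim: eventually_mono\<close>)
  then show ?thesis using False by simp
qed

lemma isCont_sign_change_imp_zero: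
  fixes h :: "real \<Rightarrow> real"
  assumes "isCont h x" "a < x" "\<And>u. a < u \<Longrightarrow> u < x \<Longrightarrow> h u > 0" "\<And>u. x < u \<Longrightarrow> h u < 0"
  shows "h x = 0"
proof -
  have "(h \<longlongrightarrow> h x) (at_left x)" "(h \<longlongrightarrow> h x) (at_right x)"
    using assms(1) by (simp_all add: isCont_def filterlim_at_split)
  moreover have "eventually (\<lambda>u. h u > 0) (at_left x)"
    using eventually_at_left_real[OF assms(2)] by eventually_elim (use assms(3) in auto)
  moreover have "eventually (\<lambda>u. h u < 0) (at_right x)"
    using eventually_at_right_real[OF less_add_one] by eventually_elim (use assms(4) in auto)
  ultimately have "h x \<ge> 0" "h x \<le> 0"
    by (auto intro: tendsto_lowerbound tendsto_upperbound simp: eventually_mono less_imp_le)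
  then show ?thesis by simp
qed

lemma root_quotient_tendsto_at_left:
  fixes h :: "real \<Rightarrow> real"
  assumes "DERIV h x :> d" "h x = 0"
  shows "((\<lambda>u. h u / (x - u)) \<longlongrightarrow> - d) (at_left x)"
proof -
  have "((\<lambda>u. (h u - h x) / (u - x)) \<longlongrightarrow> d) (at x)"
    using assms(1) by (simp add: has_field_derivative_iff)
  then have "((\<lambda>u. - ((h u - h x) / (u - x))) \<longlongrightarrow> - d) (at_left x)"
    by (intro tendsto_minus) (simp add: filterlim_at_split)
  moreover have "- ((h u - h x) / (u - x)) = h u / (x - u)" for u
    using assms(2) by (simp add: minus_divide_right)
  ultimately show ?thesis by simp
qed

lemma quadratic_positive_root:
  fixes b M :: real
  assumes "b > 0" "M > 0"
  defines "C \<equiv> (- b + sqrt (b\<^sup>2 + 4 * M)) / 2"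
  shows "C > 0" and "K > C \<Longrightarrow> K\<^sup>2 + b * K > M" and "0 < K \<Longrightarrow> K < C \<Longrightarrow> K\<^sup>2 + b * K < M"
proof -
  have "sqrt (b\<^sup>2) < sqrt (b\<^sup>2 + 4 * M)" using assms by (intro real_sqrt_less_mono) simp
  then show C: "C > 0" unfolding C_def using assms by simp
  have "(sqrt (b\<^sup>2 + 4 * M))\<^sup>2 = b\<^sup>2 + 4 * M" using assms by simp
  then have "C\<^sup>2 + b * C = M" unfolding C_def by (simp add: power2_eq_square field_simps)
  then have factor: "K\<^sup>2 + b * K - M = (K - C) * (K + C + b)"
    by (simp add: power2_eq_square algebra_simps)
  show "K\<^sup>2 + b * K > M" if "K > C"
  proof -
    have "(K - C) * (K + C + b) > 0" using that C assms(1) by (intro mult_pos_pos) linarith+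
    then show ?thesis using factor by linarith
  qed
  show "K\<^sup>2 + b * K < M" if "0 < K" "K < C"
  proof -
    have "(K - C) * (K + C + b) < 0" using that C assms(1) by (intro mult_neg_pos) linarith+
    then show ?thesis using factor by linarith
  qed
qed

text \<open>With \<open>u = U\<close>, \<open>y = \<psi>\<close> and \<open>q = 1/(p-1)\<close>, this is the derivative of
  \<open>\<psi> - K (1 - U)\<^sup>\<mu>\<close> along the wave; \<open>y\<^sup>q u\<^bsup>1-m\<^esup> / m\<close> is \<open>-U'\<close>.\<close>
definition comparison_slope ::
  "real \<Rightarrow> real \<Rightarrow> real \<Rightarrow> real \<Rightarrow> (real \<Rightarrow> real) \<Rightarrow> real \<Rightarrow> real \<Rightarrow> real \<Rightarrow> real \<Rightarrow> real" where
  "comparison_slope m c \<gamma> q h K \<mu> u y =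
     h u - (c + K * \<mu> * (1 - u) powr (\<mu> - 1)) * (y powr q * u powr (1 - m) / m) - \<gamma> * y"

lemma comparison_slope_antimono:
  assumes "m > 0" "c \<ge> 0" "\<gamma> \<ge> 0" "q \<ge> 0" "K \<ge> 0" "\<mu> \<ge> 0" "0 \<le> y" "y \<le> y'"
  shows "comparison_slope m c \<gamma> q h K \<mu> u y' \<le> comparison_slope m c \<gamma> q h K \<mu> u y"
proof -
  have "y powr q \<le> y' powr q" using assms by (intro powr_mono2) auto
  then have "(c + K * \<mu> * (1 - u) powr (\<mu> - 1)) * (y powr q * u powr (1 - m) / m)
      \<le> (c + K * \<mu> * (1 - u) powr (\<mu> - 1)) * (y' powr q * u powr (1 - m) / m)"
    using assms by (intro mult_left_mono divide_right_mono mult_right_mono) auto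
  moreover have "\<gamma> * y \<le> \<gamma> * y'" using assms by (intro mult_left_mono) auto
  ultimately show ?thesis unfolding comparison_slope_def by linarith
qed

lemma comparison_slope_at_barrier:
  assumes "0 < u" "u < 1" "K \<ge> 0"
  shows "comparison_slope m c \<gamma> q h K \<mu> u (K * (1 - u) powr \<mu>) / (1 - u)
    = h u / (1 - u) - (c + K * \<mu> * (1 - u) powr (\<mu> - 1)) * K powr q
        * (1 - u) powr (\<mu> * q - 1) * u powr (1 - m) / m - \<gamma> * K * (1 - u) powr (\<mu> - 1)"
proof -
  define s where "s = 1 - u"
  have s: "s > 0" unfolding s_def using assms by simp
  have yq: "(K * s powr \<mu>) powr q = s * (K powr q * s powr (\<mu> * q - 1))"
    using assms s by (simp add: powr_mult powr_powr powr_diff)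
  have y: "K * s powr \<mu> = s * (K * s powr (\<mu> - 1))"
    using s by (simp add: powr_diff)
  show ?thesis
    unfolding comparison_slope_def s_def[symmetric] yq unfolding y
    using s by (simp add: diff_divide_distrib)
qed

lemma comparison_slope_at_barrier_tendsto:
  assumes hlim: "((\<lambda>u. h u / (1 - u)) \<longlongrightarrow> A) (at_left 1)"
    and "K \<ge> 0" "m \<noteq> 0" "1 \<le> \<mu>" "1 \<le> \<mu> * q"
  shows "((\<lambda>u. comparison_slope m c \<gamma> q h K \<mu> u (K * (1 - u) powr \<mu>) / (1 - u)) \<longlongrightarrow>
     A - (c + K * \<mu> * of_bool (\<mu> = 1)) * K powr q * of_bool (\<mu> * q = 1) / m
       - \<gamma> * K * of_bool (\<mu> = 1)) (at_left 1)"
proof -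
  have "((\<lambda>u. (1 - u) powr (\<mu> - 1)) \<longlongrightarrow> of_bool (\<mu> = 1)) (at_left 1)"
    using tendsto_one_minus_powr_at_left_one[of "\<mu> - 1"] assms by simp
  moreover have "((\<lambda>u. (1 - u) powr (\<mu> * q - 1)) \<longlongrightarrow> of_bool (\<mu> * q = 1)) (at_left 1)"
    using tendsto_one_minus_powr_at_left_one[of "\<mu> * q - 1"] assms by simp
  moreover have "((\<lambda>u. u powr (1 - m)) \<longlongrightarrow> 1 powr (1 - m)) (at_left (1::real))"
    by (intro tendsto_intros) auto
  ultimately have "((\<lambda>u. h u / (1 - u) - (c + K * \<mu> * (1 - u) powr (\<mu> - 1)) * K powr q
        * (1 - u) powr (\<mu> * q - 1) * u powr (1 - m) / m - \<gamma> * K * (1 - u) powr (\<mu> - 1)) \<longlongrightarrow>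
     A - (c + K * \<mu> * of_bool (\<mu> = 1)) * K powr q * of_bool (\<mu> * q = 1) * 1 powr (1 - m) / m
       - \<gamma> * K * of_bool (\<mu> = 1)) (at_left 1)"
    by (intro tendsto_intros hlim) (use assms in auto)
  moreover have "eventually (\<lambda>u. h u / (1 - u) - (c + K * \<mu> * (1 - u) powr (\<mu> - 1)) * K powr q
        * (1 - u) powr (\<mu> * q - 1) * u powr (1 - m) / m - \<gamma> * K * (1 - u) powr (\<mu> - 1)
      = comparison_slope m c \<gamma> q h K \<mu> u (K * (1 - u) powr \<mu>) / (1 - u)) (at_left 1)"
    using eventually_in_unit_interval_at_left_one
    by eventually_elim (use assms(2) in \<open>simp add: comparison_slope_at_barrier\<close>)
  ultimately show ?thesis by (simp add: tendsto_cong)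
qed

lemma eventually_comparison_slope_neg_above:
  assumes lim: "((\<lambda>u. comparison_slope m c \<gamma> q h K \<mu> u (K * (1 - u) powr \<mu>) / (1 - u)) \<longlongrightarrow> L) (at_left 1)"
    and "L < 0" "m > 0" "c \<ge> 0" "\<gamma> \<ge> 0" "q \<ge> 0" "K \<ge> 0" "\<mu> \<ge> 0"
  shows "eventually (\<lambda>u. \<forall>y \<ge> K * (1 - u) powr \<mu>. comparison_slope m c \<gamma> q h K \<mu> u y < 0) (at_left 1)"
proof -
  have "eventually (\<lambda>u. comparison_slope m c \<gamma> q h K \<mu> u (K * (1 - u) powr \<mu>) / (1 - u) < 0) (at_left 1)"
    using lim \<open>L < 0\<close> by (rule order_tendstoD)
  with eventually_in_unit_interval_at_left_one show ?thesis
  proof eventually_elim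
    case (elim u)
    then have "comparison_slope m c \<gamma> q h K \<mu> u (K * (1 - u) powr \<mu>) < 0"
      by (simp add: divide_less_0_iff)
    then show ?case
      using comparison_slope_antimono[of m c \<gamma> q K \<mu> "K * (1 - u) powr \<mu>"] assms
      by (fastforce intro: le_less_trans)
  qed
qed

lemma eventually_comparison_slope_pos_below:
  assumes lim: "((\<lambda>u. comparison_slope m c \<gamma> q h K \<mu> u (K * (1 - u) powr \<mu>) / (1 - u)) \<longlongrightarrow> L) (at_left 1)"
    and "L > 0" "m > 0" "c \<ge> 0" "\<gamma> \<ge> 0" "q \<ge> 0" "K \<ge> 0" "\<mu> \<ge> 0"
  shows "eventually (\<lambda>u. \<forall>y. 0 \<le> y \<and> y \<le> K * (1 - u) powr \<mu> \<longrightarrow>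
           comparison_slope m c \<gamma> q h K \<mu> u y > 0) (at_left 1)"
proof -
  have "eventually (\<lambda>u. comparison_slope m c \<gamma> q h K \<mu> u (K * (1 - u) powr \<mu>) / (1 - u) > 0) (at_left 1)"
    using lim \<open>L > 0\<close> by (rule order_tendstoD)
  with eventually_in_unit_interval_at_left_one show ?thesis
  proof eventually_elim
    case (elim u)
    then have "comparison_slope m c \<gamma> q h K \<mu> u (K * (1 - u) powr \<mu>) > 0"
      by (simp add: zero_less_divide_iff)
    then show ?case
      using comparison_slope_antimono[of m c \<gamma> q K \<mu> _ "K * (1 - u) powr \<mu>"] assms
      by (fastforce intro: less_le_trans)
  qed
qed

lemma flux_asymp_of_bounds:
  assumes C: "C > 0"
    and upper: "\<And>K. K > C \<Longrightarrow> \<exists>\<delta>>0. \<forall>\<xi>. 1 - \<delta> < U \<xi> \<and> U \<xi> < 1 \<longrightarrow>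
                  wave_flux m p U \<xi> \<le> K * (1 - U \<xi>) powr \<mu>"
    and lower: "\<And>K. 0 < K \<Longrightarrow> K < C \<Longrightarrow> \<exists>\<delta>>0. \<forall>\<xi>. 1 - \<delta> < U \<xi> \<and> U \<xi> < 1 \<longrightarrow>
                  wave_flux m p U \<xi> \<ge> K * (1 - U \<xi>) powr \<mu>"
  shows "flux_asymp m p U C \<mu>"
  unfolding flux_asymp_def
proof (intro allI impI)
  fix \<epsilon> :: real assume "\<epsilon> > 0"
  define e where "e = min \<epsilon> 1 / 2"
  have e: "e > 0" "e < \<epsilon>" "e < 1" unfolding e_def using \<open>\<epsilon> > 0\<close> by auto
  obtain \<delta>1 where "\<delta>1 > 0" and \<delta>1: "\<And>\<xi>. 1 - \<delta>1 < U \<xi> \<and> U \<xi> < 1 \<Longrightarrow>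
      wave_flux m p U \<xi> \<le> C * (1 + e) * (1 - U \<xi>) powr \<mu>"
    using upper[of "C * (1 + e)"] C e by auto
  obtain \<delta>2 where "\<delta>2 > 0" and \<delta>2: "\<And>\<xi>. 1 - \<delta>2 < U \<xi> \<and> U \<xi> < 1 \<Longrightarrow>
      wave_flux m p U \<xi> \<ge> C * (1 - e) * (1 - U \<xi>) powr \<mu>"
    using lower[of "C * (1 - e)"] C e by auto
  have "\<bar>wave_flux m p U \<xi> / (C * (1 - U \<xi>) powr \<mu>) - 1\<bar> < \<epsilon>"
    if "1 - min \<delta>1 \<delta>2 < U \<xi> \<and> U \<xi> < 1" for \<xi>
  proof -
    have S: "C * (1 - U \<xi>) powr \<mu> > 0" using C that by simp
    have "wave_flux m p U \<xi> \<le> (1 + e) * (C * (1 - U \<xi>) powr \<mu>)"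
      and "(1 - e) * (C * (1 - U \<xi>) powr \<mu>) \<le> wave_flux m p U \<xi>"
      using \<delta>1[of \<xi>] \<delta>2[of \<xi>] that by (auto simp: mult_ac)
    then have "wave_flux m p U \<xi> / (C * (1 - U \<xi>) powr \<mu>) \<le> 1 + e"
      and "1 - e \<le> wave_flux m p U \<xi> / (C * (1 - U \<xi>) powr \<mu>)"
      using S by (simp_all add: divide_le_eq le_divide_eq)
    then show ?thesis using e by linarith
  qed
  then show "\<exists>\<delta>>0. \<forall>\<xi>. 1 - \<delta> < U \<xi> \<and> U \<xi> < 1 \<longrightarrow>
      \<bar>wave_flux m p U \<xi> / (C * (1 - U \<xi>) powr \<mu>) - 1\<bar> < \<epsilon>"
    using \<open>\<delta>1 > 0\<close> \<open>\<delta>2 > 0\<close> by (intro exI[of _ "min \<delta>1 \<delta>2"]) auto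
qed

locale wavefront =
  fixes m p \<gamma> c :: real and h U :: "real \<Rightarrow> real"
  assumes m_pos: "m > 0" and p_gt1: "p > 1" and c_pos: "c > 0" and \<gamma>_nonneg: "\<gamma> \<ge> 0"
    and h_continuous: "continuous_on {0..} h"
    and wave: "finite_wavefront m p \<gamma> h c U"
begin

abbreviation flux :: "real \<Rightarrow> real" where "flux \<equiv> wave_flux m p U"

abbreviation power_slope :: "real \<Rightarrow> real" where "power_slope \<equiv> deriv (\<lambda>t. U t powr m)"

lemma profile_continuous: "continuous_on UNIV U"
  and profile_antimono: "antimono U"
  and profile_tendsto_at_bot: "(U \<longlongrightarrow> 1) at_bot"
  using wave unfolding finite_wavefront_def by auto

lemma profile_nonneg: "0 \<le> U t"
proof -
  obtain \<xi>0 where "\<forall>\<xi>\<ge>\<xi>0. U \<xi> = 0" using wave unfolding finite_wavefront_def by blast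
  moreover have "U (max t \<xi>0) \<le> U t" using profile_antimono by (simp add: antimono_def)
  ultimately show ?thesis by simp
qed

lemma profile_le_one: "U t \<le> 1"
proof (rule tendsto_le[OF _ profile_tendsto_at_bot tendsto_const])
  show "\<forall>\<^sub>F x in at_bot. U t \<le> U x"
    unfolding eventually_at_bot_linorder using profile_antimono
    by (auto simp: antimono_def intro!: exI[of _ t])
qed simp

lemma power_has_derivative: "((\<lambda>t. U t powr m) has_real_derivative power_slope t) (at t)"
  using wave unfolding finite_wavefront_def tw_solution_def
  by (simp add: DERIV_deriv_iff_real_differentiable)

lemma power_slope_nonpos: "power_slope t \<le> 0"
proof (rule ccontr)
  assume "\<not> power_slope t \<le> 0"
  then obtain d where d: "d > 0" "\<And>e. 0 < e \<Longrightarrow> e < d \<Longrightarrow> U t powr m < U (t + e) powr m"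
    using DERIV_pos_inc_right[OF power_has_derivative[of t]] by auto
  have "U (t + d/2) \<le> U t" using profile_antimono d(1) by (simp add: antimono_def)
  then have "U (t + d/2) powr m \<le> U t powr m"
    using profile_nonneg m_pos by (intro powr_mono2) auto
  moreover have "U t powr m < U (t + d/2) powr m" using d by simp
  ultimately show False by simp
qed

lemma power_slope_eq: "power_slope t = - (flux t powr (1 / (p - 1)))"
proof -
  have "flux t powr (1 / (p - 1)) = \<bar>power_slope t\<bar> powr ((p - 1) * (1 / (p - 1)))"
    unfolding wave_flux_def by (simp add: powr_powr)
  also have "\<dots> = - power_slope t" using p_gt1 power_slope_nonpos[of t] by simp
  finally show ?thesis by simp
qed

lemma flux_balance:
  assumes "a \<le> b"
  shows "flux integrable_on {a..b}"
    and "flux b = flux a - \<gamma> * integral {a..b} flux + integral {a..b} (\<lambda>s. h (U s)) + c * (U b - U a)"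
proof -
  have pflux: "pflux p (power_slope t) = - flux t" for t
    using power_slope_nonpos[of t] unfolding pflux_def wave_flux_def
    by (cases "power_slope t = 0") auto
  have "(\<lambda>s. - flux s) integrable_on {a..b} \<and>
        - flux b + flux a + \<gamma> * integral {a..b} (\<lambda>s. - flux s) + integral {a..b} (\<lambda>s. h (U s))
          + c * (U b - U a) = 0"
    using wave assms unfolding finite_wavefront_def tw_solution_def Let_def pflux by simp
  then show "flux integrable_on {a..b}"
    and "flux b = flux a - \<gamma> * integral {a..b} flux + integral {a..b} (\<lambda>s. h (U s)) + c * (U b - U a)"
    by (simp_all add: integrable_neg_iff integral_neg)
qed

lemma h_profile_continuous: "continuous_on UNIV (\<lambda>s. h (U s))"
  by (rule continuous_on_compose2[OF h_continuous profile_continuous]) (auto simp: profile_nonneg)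

lemma flux_continuous: "continuous_on UNIV flux"
proof (rule continuous_at_imp_continuous_on, intro ballI)
  fix t :: real
  have "continuous_on {t - 1..t + 1} (\<lambda>x. flux (t - 1) - \<gamma> * integral {t - 1..x} flux
      + integral {t - 1..x} (\<lambda>s. h (U s)) + c * (U x - U (t - 1)))"
    by (intro continuous_intros indefinite_integral_continuous_1 flux_balance(1)
        integrable_continuous_interval continuous_on_subset[OF h_profile_continuous]
        continuous_on_subset[OF profile_continuous]) auto
  then have "continuous_on {t - 1..t + 1} flux"
    by (rule continuous_on_eq) (use flux_balance(2) in auto)
  then show "isCont flux t" by (rule continuous_on_interior) auto
qed

lemma flux_eq_zero_at_one:
  assumes "U t = 1"
  shows "flux t = 0"
proof -
  have "power_slope t = 0"
  proof (rule DERIV_local_max[OF power_has_derivative zero_less_one], intro allI impI)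
    fix y :: real
    show "U y powr m \<le> U t powr m"
      using assms profile_nonneg profile_le_one m_pos by (intro powr_mono2) auto
  qed
  then show ?thesis unfolding wave_flux_def by simp
qed

lemma profile_has_derivative:
  assumes "0 < U t"
  shows "(U has_real_derivative power_slope t * U t powr (1 - m) / m) (at t)"
proof -
  have U_eq: "U x = (U x powr m) powr (1 / m)" for x
    using m_pos profile_nonneg[of x] by (simp add: powr_powr)
  have "((\<lambda>x. (U x powr m) powr (1 / m)) has_real_derivative
      (1 / m) * (U t powr m) powr (1 / m - 1) * power_slope t) (at t)"
    using DERIV_fun_powr[OF power_has_derivative, of t "1 / m"] assms by simp
  moreover have "(U t powr m) powr (1 / m - 1) = U t powr (1 - m)"
    using m_pos by (simp add: powr_powr algebra_simps)
  ultimately show ?thesis by (subst (asm) U_eq[symmetric]) (simp add: mult.commute)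
qed

lemma flux_has_derivative:
  assumes "0 < U t"
  shows "(flux has_real_derivative h (U t) + c * (power_slope t * U t powr (1 - m) / m) - \<gamma> * flux t) (at t)"
proof -
  define a b where "a = t - 1" and "b = t + 1"
  have ab: "a < t" "t < b" unfolding a_def b_def by auto
  have "((\<lambda>x. integral {a..x} flux) has_real_derivative flux t) (at t within {a..b})"
    by (rule integral_has_real_derivative) (use ab in \<open>auto intro: continuous_on_subset[OF flux_continuous]\<close>)
  moreover have "((\<lambda>x. integral {a..x} (\<lambda>s. h (U s))) has_real_derivative h (U t)) (at t within {a..b})"
    by (rule integral_has_real_derivative)
       (use ab in \<open>auto intro: continuous_on_subset[OF h_profile_continuous]\<close>)
  moreover note has_field_derivative_at_within[OF profile_has_derivative[OF assms]]
  ultimately have "((\<lambda>x. flux a - \<gamma> * integral {a..x} flux + integral {a..x} (\<lambda>s. h (U s)) + c * (U x - U a))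
      has_real_derivative h (U t) + c * (power_slope t * U t powr (1 - m) / m) - \<gamma> * flux t)
      (at t within {a..b})"
    by (auto intro!: derivative_eq_intros)
  then have "((\<lambda>x. flux a - \<gamma> * integral {a..x} flux + integral {a..x} (\<lambda>s. h (U s)) + c * (U x - U a))
      has_real_derivative h (U t) + c * (power_slope t * U t powr (1 - m) / m) - \<gamma> * flux t) (at t)"
    using at_within_Icc_at[OF ab] by simp
  then show ?thesis
    by (rule has_field_derivative_transform_within_open[where S = "{a<..<b}"])
       (use ab flux_balance(2)[of a] in \<open>auto simp: algebra_simps\<close>)
qed

lemma flux_frequently_small:
  assumes "g > 0"
  shows "\<exists>x\<le>\<xi>. flux x < g"
proof (rule ccontr)
  assume "\<not> (\<exists>x\<le>\<xi>. flux x < g)"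
  then have large: "g \<le> flux x" if "x \<le> \<xi>" for x using that by (meson not_le)
  define e where "e = g powr (1 / (p - 1))"
  have e: "e > 0" unfolding e_def using assms by simp
  have steep: "power_slope x \<le> - e" if "x \<le> \<xi>" for x
    using large[OF that] assms p_gt1 unfolding e_def power_slope_eq
    by (simp add: powr_mono2)
  \<comment> \<open>\<open>U\<^sup>m\<close> would drop by more than 1 on an interval of length \<open>2/e\<close>.\<close>
  obtain z where z: "\<xi> - 2 / e < z" "z < \<xi>"
    and mvt: "U \<xi> powr m - U (\<xi> - 2 / e) powr m = (\<xi> - (\<xi> - 2 / e)) * power_slope z"
    using MVT2[of "\<xi> - 2 / e" \<xi> "\<lambda>t. U t powr m" power_slope] power_has_derivative e by auto
  have "(\<xi> - (\<xi> - 2 / e)) * power_slope z \<le> (2 / e) * (- e)"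
    using steep[of z] z(2) e by (simp add: divide_simps)
  then have "U \<xi> powr m - U (\<xi> - 2 / e) powr m \<le> -2" using mvt e by simp
  moreover have "U (\<xi> - 2 / e) powr m \<le> 1 powr m"
    using profile_nonneg profile_le_one m_pos by (intro powr_mono2) auto
  ultimately show False using powr_ge_zero[of "U \<xi>" m] by simp
qed

lemma barrier_gap_has_derivative:
  assumes "0 < U t" "U t < 1"
  shows "((\<lambda>t. flux t - K * (1 - U t) powr \<mu>) has_real_derivative
      comparison_slope m c \<gamma> (1 / (p - 1)) h K \<mu> (U t) (flux t)) (at t)"
proof -
  have "((\<lambda>t. 1 - U t) has_real_derivative - (power_slope t * U t powr (1 - m) / m)) (at t)"
    using profile_has_derivative[OF assms(1)] by (intro derivative_eq_intros) auto
  then have "((\<lambda>t. (1 - U t) powr \<mu>) has_real_derivative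
      \<mu> * (1 - U t) powr (\<mu> - of_nat 1) * - (power_slope t * U t powr (1 - m) / m)) (at t)"
    by (rule DERIV_fun_powr) (use assms(2) in simp)
  then have "((\<lambda>t. flux t - K * (1 - U t) powr \<mu>) has_real_derivative
      (h (U t) + c * (power_slope t * U t powr (1 - m) / m) - \<gamma> * flux t)
        - K * (\<mu> * (1 - U t) powr (\<mu> - of_nat 1) * - (power_slope t * U t powr (1 - m) / m))) (at t)"
    by (intro DERIV_diff DERIV_cmult flux_has_derivative assms(1))
  then show ?thesis
    unfolding comparison_slope_def power_slope_eq by (simp add: algebra_simps add_divide_distrib)
qed

lemma barrier_gap_continuous: "continuous_on S (\<lambda>t. flux t - K * (1 - U t) powr \<mu>)"
  if "\<mu> > 0"
proof -
  have "continuous_on UNIV (\<lambda>t. flux t - K * (1 - U t) powr \<mu>)"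
    using that profile_le_one
    by (intro continuous_intros continuous_on_powr' flux_continuous profile_continuous) auto
  then show ?thesis by (rule continuous_on_subset) auto
qed

lemma flux_le_barrier_near_one:
  assumes "\<mu> > 0" "K \<ge> 0"
    and slope_neg: "eventually (\<lambda>u. \<forall>y \<ge> K * (1 - u) powr \<mu>.
                      comparison_slope m c \<gamma> (1 / (p - 1)) h K \<mu> u y < 0) (at_left 1)"
  shows "\<exists>\<delta>>0. \<forall>\<xi>. 1 - \<delta> < U \<xi> \<and> U \<xi> < 1 \<longrightarrow> flux \<xi> \<le> K * (1 - U \<xi>) powr \<mu>"
proof -
  define \<Phi> where "\<Phi> = (\<lambda>t. flux t - K * (1 - U t) powr \<mu>)"
  obtain \<delta> where "0 < \<delta>" and \<delta>: "\<And>u. 1 - \<delta> < u \<Longrightarrow> u < 1 \<Longrightarrow>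
      0 < u \<and> (\<forall>y \<ge> K * (1 - u) powr \<mu>. comparison_slope m c \<gamma> (1 / (p - 1)) h K \<mu> u y < 0)"
    using eventually_at_left_one_obtains_delta[OF slope_neg] by blast
  have "flux \<xi> \<le> K * (1 - U \<xi>) powr \<mu>" if \<xi>: "1 - \<delta> < U \<xi>" "U \<xi> < 1" for \<xi>
  proof (rule ccontr)
    assume "\<not> ?thesis"
    then have pos: "\<Phi> \<xi> > 0" unfolding \<Phi>_def by simp
    have key: "\<Phi> \<xi> \<le> \<Phi> x" if "x \<le> \<xi>" and below_one: "\<And>t. x < t \<Longrightarrow> t \<le> \<xi> \<Longrightarrow> U t \<noteq> 1" for x
    proof (cases "x = \<xi>")
      case False
      show ?thesis
      proof (rule decreasing_where_pos_imp_ge[where \<Phi> = \<Phi>])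
        show "continuous_on {x..\<xi>} \<Phi>" unfolding \<Phi>_def using assms(1) by (rule barrier_gap_continuous)
        fix t assume t: "x < t" "t < \<xi>" "\<Phi> t > 0"
        have "U \<xi> \<le> U t" using profile_antimono t(2) by (simp add: antimono_def)
        then have "1 - \<delta> < U t" using \<xi>(1) by simp
        moreover have "U t < 1" using below_one[of t] t profile_le_one[of t] by simp
        moreover have "K * (1 - U t) powr \<mu> \<le> flux t" using t(3) unfolding \<Phi>_def by simp
        ultimately have "0 < U t" "U t < 1" "comparison_slope m c \<gamma> (1 / (p - 1)) h K \<mu> (U t) (flux t) < 0"
          using \<delta>[of "U t"] by auto
        then show "\<exists>d. DERIV \<Phi> t :> d \<and> d < 0"
          unfolding \<Phi>_def using barrier_gap_has_derivative by blast
      qed (use False that pos in auto)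
    qed simp
    show False
    proof (rule last_level_point_cases[OF profile_continuous, of \<xi> 1])
      fix t1 assume t1: "t1 < \<xi>" "U t1 = 1" "\<And>t. t1 < t \<Longrightarrow> t \<le> \<xi> \<Longrightarrow> U t \<noteq> 1"
      then have "\<Phi> t1 = 0" unfolding \<Phi>_def using flux_eq_zero_at_one by simp
      then show False using t1 key[of t1] pos by simp
    next
      assume below_one: "\<And>t. t \<le> \<xi> \<Longrightarrow> U t \<noteq> 1"
      obtain x where "x \<le> \<xi>" "flux x < \<Phi> \<xi>" using flux_frequently_small[OF pos] by blast
      moreover have "\<Phi> x \<le> flux x" unfolding \<Phi>_def using assms(2) by simp
      ultimately show False using below_one key[of x] by simp
    qed (use \<xi> in simp)
  qed
  then show ?thesis using \<open>0 < \<delta>\<close> by blast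
qed

lemma flux_ge_barrier_near_one:
  assumes "\<mu> > 0" "K \<ge> 0"
    and slope_pos: "eventually (\<lambda>u. \<forall>y. 0 \<le> y \<and> y \<le> K * (1 - u) powr \<mu> \<longrightarrow>
                      comparison_slope m c \<gamma> (1 / (p - 1)) h K \<mu> u y > 0) (at_left 1)"
  shows "\<exists>\<delta>>0. \<forall>\<xi>. 1 - \<delta> < U \<xi> \<and> U \<xi> < 1 \<longrightarrow> flux \<xi> \<ge> K * (1 - U \<xi>) powr \<mu>"
proof -
  define \<Phi> where "\<Phi> = (\<lambda>t. flux t - K * (1 - U t) powr \<mu>)"
  obtain \<delta> where "0 < \<delta>" and \<delta>: "\<And>u. 1 - \<delta> < u \<Longrightarrow> u < 1 \<Longrightarrow> 0 < u \<and>
      (\<forall>y. 0 \<le> y \<and> y \<le> K * (1 - u) powr \<mu> \<longrightarrow> comparison_slope m c \<gamma> (1 / (p - 1)) h K \<mu> u y > 0)"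
    using eventually_at_left_one_obtains_delta[OF slope_pos] by blast
  have "flux \<xi> \<ge> K * (1 - U \<xi>) powr \<mu>" if \<xi>: "1 - \<delta> < U \<xi>" "U \<xi> < 1" for \<xi>
  proof (rule ccontr)
    assume "\<not> ?thesis"
    then have neg: "\<Phi> \<xi> < 0" unfolding \<Phi>_def by simp
    have key: "\<Phi> x \<le> \<Phi> \<xi>" if "x \<le> \<xi>" and below_one: "\<And>t. x < t \<Longrightarrow> t \<le> \<xi> \<Longrightarrow> U t \<noteq> 1" for x
    proof (cases "x = \<xi>")
      case False
      show ?thesis
      proof (rule increasing_where_neg_imp_le[where \<Phi> = \<Phi>])
        show "continuous_on {x..\<xi>} \<Phi>" unfolding \<Phi>_def using assms(1) by (rule barrier_gap_continuous)
        fix t assume t: "x < t" "t < \<xi>" "\<Phi> t < 0"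
        have "U \<xi> \<le> U t" using profile_antimono t(2) by (simp add: antimono_def)
        then have "1 - \<delta> < U t" using \<xi>(1) by simp
        moreover have "U t < 1" using below_one[of t] t profile_le_one[of t] by simp
        moreover have "flux t \<le> K * (1 - U t) powr \<mu>" using t(3) unfolding \<Phi>_def by simp
        moreover have "0 \<le> flux t" unfolding wave_flux_def by simp
        ultimately have "0 < U t" "U t < 1" "comparison_slope m c \<gamma> (1 / (p - 1)) h K \<mu> (U t) (flux t) > 0"
          using \<delta>[of "U t"] by auto
        then show "\<exists>d. DERIV \<Phi> t :> d \<and> d > 0"
          unfolding \<Phi>_def using barrier_gap_has_derivative by blast
      qed (use False that neg in auto)
    qed simp
    show False
    proof (rule last_level_point_cases[OF profile_continuous, of \<xi> 1])
      fix t1 assume t1: "t1 < \<xi>" "U t1 = 1" "\<And>t. t1 < t \<Longrightarrow> t \<le> \<xi> \<Longrightarrow> U t \<noteq> 1"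
      then have "\<Phi> t1 = 0" unfolding \<Phi>_def using flux_eq_zero_at_one by simp
      then show False using t1 key[of t1] neg by simp
    next
      assume below_one: "\<And>t. t \<le> \<xi> \<Longrightarrow> U t \<noteq> 1"
      have "((\<lambda>x. K * (1 - U x) powr \<mu>) \<longlongrightarrow> K * (1 - 1) powr \<mu>) at_bot"
        using profile_le_one assms(1) by (intro tendsto_intros profile_tendsto_at_bot) auto
      then have "eventually (\<lambda>x. K * (1 - U x) powr \<mu> < - \<Phi> \<xi>) at_bot"
        using neg by (intro order_tendstoD) auto
      then obtain x where "x \<le> \<xi>" "K * (1 - U x) powr \<mu> < - \<Phi> \<xi>"
        unfolding eventually_at_bot_linorder by (meson min.cobounded1 min.cobounded2)
      moreover have "0 \<le> flux x" unfolding wave_flux_def by simp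
      ultimately show False using below_one key[of x] unfolding \<Phi>_def by simp
    qed (use \<xi> in simp)
  qed
  then show ?thesis using \<open>0 < \<delta>\<close> by blast
qed

text \<open>\<open>L K\<close> is the limit provided by \<open>comparison_slope_at_barrier_tendsto\<close>.\<close>
lemma flux_asymp_of_threshold:
  fixes A \<mu> C :: real
  defines "L \<equiv> \<lambda>K. A - (c + K * \<mu> * of_bool (\<mu> = 1)) * K powr (1 / (p - 1))
                      * of_bool (\<mu> = p - 1) / m - \<gamma> * K * of_bool (\<mu> = 1)"
  assumes hlim: "((\<lambda>u. h u / (1 - u)) \<longlongrightarrow> A) (at_left 1)"
    and \<mu>_ge_1: "1 \<le> \<mu>" and \<mu>_ge: "p - 1 \<le> \<mu>" and "0 < C"
    and above: "\<And>K. C < K \<Longrightarrow> L K < 0" and below: "\<And>K. 0 < K \<Longrightarrow> K < C \<Longrightarrow> 0 < L K"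
  shows "flux_asymp m p U C \<mu>"
proof -
  have q: "1 \<le> \<mu> * (1 / (p - 1))" "0 \<le> 1 / (p - 1)" and "(\<mu> * (1 / (p - 1)) = 1) = (\<mu> = p - 1)"
    using \<mu>_ge p_gt1 by (auto simp: field_simps)
  then have lim: "((\<lambda>u. comparison_slope m c \<gamma> (1 / (p - 1)) h K \<mu> u (K * (1 - u) powr \<mu>) / (1 - u))
      \<longlongrightarrow> L K) (at_left 1)" if "K \<ge> 0" for K
    using comparison_slope_at_barrier_tendsto[OF hlim that _ \<mu>_ge_1 q(1), of m c \<gamma>] m_pos
    unfolding L_def by simp
  show ?thesis
  proof (rule flux_asymp_of_bounds[OF \<open>0 < C\<close>])
    fix K assume "C < K"
    then have "K \<ge> 0" using \<open>0 < C\<close> by simp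
    have "eventually (\<lambda>u. \<forall>y \<ge> K * (1 - u) powr \<mu>.
        comparison_slope m c \<gamma> (1 / (p - 1)) h K \<mu> u y < 0) (at_left 1)"
      using m_pos c_pos \<gamma>_nonneg q(2) \<mu>_ge_1 \<open>K \<ge> 0\<close> above[OF \<open>C < K\<close>]
      by (intro eventually_comparison_slope_neg_above[OF lim]) auto
    then show "\<exists>\<delta>>0. \<forall>\<xi>. 1 - \<delta> < U \<xi> \<and> U \<xi> < 1 \<longrightarrow> flux \<xi> \<le> K * (1 - U \<xi>) powr \<mu>"
      using \<mu>_ge_1 \<open>K \<ge> 0\<close> by (intro flux_le_barrier_near_one) auto
  next
    fix K assume "0 < K" "K < C"
    have "eventually (\<lambda>u. \<forall>y. 0 \<le> y \<and> y \<le> K * (1 - u) powr \<mu> \<longrightarrow>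
        comparison_slope m c \<gamma> (1 / (p - 1)) h K \<mu> u y > 0) (at_left 1)"
      using m_pos c_pos \<gamma>_nonneg q(2) \<mu>_ge_1 \<open>0 < K\<close> below[OF \<open>0 < K\<close> \<open>K < C\<close>]
      by (intro eventually_comparison_slope_pos_below[OF lim]) auto
    then show "\<exists>\<delta>>0. \<forall>\<xi>. 1 - \<delta> < U \<xi> \<and> U \<xi> < 1 \<longrightarrow> flux \<xi> \<ge> K * (1 - U \<xi>) powr \<mu>"
      using \<mu>_ge_1 \<open>0 < K\<close> by (intro flux_ge_barrier_near_one) auto
  qed
qed

lemma flux_asymp_p_gt_2:
  assumes hlim: "((\<lambda>u. h u / (1 - u)) \<longlongrightarrow> A) (at_left 1)" and "A > 0" "p > 2"
  shows "flux_asymp m p U ((m * A / c) powr (p - 1)) (p - 1)"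
proof -
  define C where "C = (m * A / c) powr (p - 1)"
  have "m * A / c > 0" using m_pos c_pos assms(2) by simp
  then have C: "C > 0" "C powr (1 / (p - 1)) = m * A / c"
    unfolding C_def using assms(3) m_pos c_pos assms(2) by (simp_all add: powr_powr)
  have q: "1 / (p - 1) > 0" using assms(3) by simp
  show ?thesis unfolding C_def[symmetric]
  proof (rule flux_asymp_of_threshold[OF hlim])
    fix K assume "C < K"
    then have "m * A / c < K powr (1 / (p - 1))"
      using powr_less_mono2[OF q _ \<open>C < K\<close>] C by simp
    then show "A - (c + K * (p - 1) * of_bool (p - 1 = 1)) * K powr (1 / (p - 1))
        * of_bool (p - 1 = p - 1) / m - \<gamma> * K * of_bool (p - 1 = 1) < 0"
      using assms(3) m_pos c_pos by (simp add: field_simps)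
  next
    fix K assume "0 < K" "K < C"
    then have "K powr (1 / (p - 1)) < m * A / c"
      using powr_less_mono2[OF q _ \<open>K < C\<close>] C by simp
    then show "0 < A - (c + K * (p - 1) * of_bool (p - 1 = 1)) * K powr (1 / (p - 1))
        * of_bool (p - 1 = p - 1) / m - \<gamma> * K * of_bool (p - 1 = 1)"
      using assms(3) m_pos c_pos by (simp add: field_simps)
  qed (use assms(3) C in auto)
qed

lemma flux_asymp_p_eq_2:
  assumes hlim: "((\<lambda>u. h u / (1 - u)) \<longlongrightarrow> A) (at_left 1)" and "A > 0" "p = 2"
  shows "flux_asymp m p U ((- (c + \<gamma> * m) + sqrt ((c + \<gamma> * m)\<^sup>2 + 4 * (m * A))) / 2) 1"
proof -
  have b: "c + \<gamma> * m > 0" using c_pos \<gamma>_nonneg m_pos by (simp add: add_pos_nonneg)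
  have M: "m * A > 0" using m_pos assms(2) by simp
  note root = quadratic_positive_root[OF b M]
  show ?thesis
  proof (rule flux_asymp_of_threshold[OF hlim])
    fix K assume "(- (c + \<gamma> * m) + sqrt ((c + \<gamma> * m)\<^sup>2 + 4 * (m * A))) / 2 < K"
    then have "K > 0" "K\<^sup>2 + (c + \<gamma> * m) * K > m * A" using root(1,2) by auto
    then show "A - (c + K * 1 * of_bool (1 = 1)) * K powr (1 / (p - 1))
        * of_bool ((1::real) = p - 1) / m - \<gamma> * K * of_bool ((1::real) = 1) < 0"
      using assms(3) m_pos by (simp add: field_simps power2_eq_square)
  next
    fix K assume "0 < K" "K < (- (c + \<gamma> * m) + sqrt ((c + \<gamma> * m)\<^sup>2 + 4 * (m * A))) / 2"
    then have "K\<^sup>2 + (c + \<gamma> * m) * K < m * A" using root(3) by auto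
    then show "0 < A - (c + K * 1 * of_bool (1 = 1)) * K powr (1 / (p - 1))
        * of_bool ((1::real) = p - 1) / m - \<gamma> * K * of_bool ((1::real) = 1)"
      using assms(3) m_pos \<open>0 < K\<close> by (simp add: field_simps power2_eq_square)
  qed (use assms(3) root(1) in auto)
qed

lemma flux_asymp_p_lt_2:
  assumes hlim: "((\<lambda>u. h u / (1 - u)) \<longlongrightarrow> A) (at_left 1)" and "A > 0" "p < 2" "\<gamma> > 0"
  shows "flux_asymp m p U (A / \<gamma>) 1"
proof (rule flux_asymp_of_threshold[OF hlim])
  fix K assume "A / \<gamma> < K"
  then show "A - (c + K * 1 * of_bool (1 = 1)) * K powr (1 / (p - 1))
      * of_bool ((1::real) = p - 1) / m - \<gamma> * K * of_bool ((1::real) = 1) < 0"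
    using assms(3,4) by (simp add: field_simps)
next
  fix K assume "0 < K" "K < A / \<gamma>"
  then show "0 < A - (c + K * 1 * of_bool (1 = 1)) * K powr (1 / (p - 1))
      * of_bool ((1::real) = p - 1) / m - \<gamma> * K * of_bool ((1::real) = 1)"
    using assms(3,4) by (simp add: field_simps)
qed (use assms p_gt1 in auto)

end

theorem mainTheorem10:
  fixes m p a \<gamma>s \<gamma> :: real and h :: "real \<Rightarrow> real" and cg :: "real \<Rightarrow> real"
    and U :: "real \<Rightarrow> real"
  assumes m_pos: "m > 0" and p_gt1: "p > 1" and mp: "m * (p - 1) > 1"
    and h_C1: "\<exists>h'. continuous_on {0..} h' \<and>
                 (\<forall>x\<ge>0. (h has_real_derivative h' x) (at x within {0..}))"
    and h0: "h 0 = 0"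
    and a_range: "0 \<le> a" "a < 1"
    and h_neg_a: "\<forall>u\<in>{0..a}. h u \<le> 0"
    and h_pos: "\<forall>u\<in>{a<..<1}. h u > 0"
    and h_neg_1: "\<forall>u>1. h u < 0"
    and h'_1: "deriv h 1 < 0"
    and h_int: "a > 0 \<longrightarrow> integral {0..1} (\<lambda>u. h u * u powr (m - 1)) > 0"
    and \<gamma>s_pos: "\<gamma>s > 0"
    and cg_def: "\<forall>g\<in>{0..<\<gamma>s}. cg g > 0 \<and> (\<exists>V. finite_wavefront m p g h (cg g) V) \<and>
                   (\<forall>c V. c > 0 \<and> finite_wavefront m p g h c V \<longrightarrow> c = cg g)"
    and tw_unique: "\<forall>g\<in>{0..<\<gamma>s}. \<forall>V W. finite_wavefront m p g h (cg g) V \<and>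
                   finite_wavefront m p g h (cg g) W \<longrightarrow> (\<exists>\<tau>. \<forall>\<xi>. W \<xi> = V (\<xi> + \<tau>))"
    and \<gamma>_range: "0 \<le> \<gamma>" "\<gamma> < \<gamma>s"
    and U_wave: "finite_wavefront m p \<gamma> h (cg \<gamma>) U"
  shows "(p > 2 \<longrightarrow>
            flux_asymp m p U ((m * \<bar>deriv h 1\<bar> / cg \<gamma>) powr (p - 1)) (p - 1)) \<and>
         (p = 2 \<longrightarrow>
            flux_asymp m p U
              ((- (cg \<gamma> + \<gamma> * m) + sqrt ((cg \<gamma> + \<gamma> * m)\<^sup>2 + 4 * m * \<bar>deriv h 1\<bar>)) / 2) 1) \<and>
         (p < 2 \<and> \<gamma> > 0 \<longrightarrow> flux_asymp m p U (\<bar>deriv h 1\<bar> / \<gamma>) 1)"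
proof -
  obtain h' where h'_deriv: "\<And>x. x \<ge> 0 \<Longrightarrow> (h has_real_derivative h' x) (at x within {0..})"
    using h_C1 by blast
  have "continuous_on {0..} h" by (rule DERIV_continuous_on) (use h'_deriv in auto)
  have "(h has_real_derivative h' 1) (at 1 within {0<..})"
    by (rule has_field_derivative_subset[OF h'_deriv]) auto
  then have "DERIV h 1 :> h' 1" by (simp add: at_within_open[of 1 "{0<..}"])
  then have h_deriv_1: "DERIV h 1 :> deriv h 1" by (simp add: DERIV_imp_deriv)
  have "h 1 = 0"
    using isCont_sign_change_imp_zero[OF DERIV_isCont[OF h_deriv_1] a_range(2)] h_pos h_neg_1 by auto
  with h_deriv_1 have hlim: "((\<lambda>u. h u / (1 - u)) \<longlongrightarrow> \<bar>deriv h 1\<bar>) (at_left 1)"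
    using root_quotient_tendsto_at_left h'_1 by fastforce
  have "cg \<gamma> > 0" using cg_def \<gamma>_range by auto
  interpret wavefront m p \<gamma> "cg \<gamma>" h U
    by unfold_locales (use m_pos p_gt1 \<open>cg \<gamma> > 0\<close> \<gamma>_range \<open>continuous_on {0..} h\<close> U_wave in auto)
  have "\<bar>deriv h 1\<bar> > 0" using h'_1 by simp
  then show ?thesis
    using flux_asymp_p_gt_2[OF hlim] flux_asymp_p_eq_2[OF hlim] flux_asymp_p_lt_2[OF hlim]
    by (simp add: mult.assoc)
qed

end
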